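(* Let $p\ge q\ge1$. Let $Q_1:\mathbb{R}^{d_0}\to\mathbb{R}^{d_1}$ and $Q_2:\mathbb{R}^{d_0}\to\mathbb{R}^{d_2}$ be measurable. Fix a measurable partition $U_1,\dots,U_l$ of $[0,1]^{d_0}$ and a measurable set $B\subset\mathbb{R}^{d_0+d_1}$. For measurable $U\subset\mathbb{R}^{d_0}$ define $E^{(1)}_Ug(x_0,x_1)=\int_U g(u)e(x_0\cdot u+x_1\cdot Q_1(u))\,du$ and $E^{(2)}_Uh(x_0,x_1,x_2)=\int_U h(u)e(x_0\cdot u+x_1\cdot Q_1(u)+x_2\cdot Q_2(u))\,du$, where $x_i\in\mathbb{R}^{d_i}$ and $e(z)=e^{2\pi iz}$. Suppose $C$ is a number such that $\|E^{(1)}_{[0,1]^{d_0}}g\|_{L^p(B)}\le C\big(\sum_i\|E^{(1)}_{U_i}g\|_{L^p(B)}^q\big)^{1/q}$ for all measurable $g$. Then for every measurable $B'\subset\mathbb{R}^{d_2}$ and every measurable $h$, $\|E^{(2)}_{[0,1]^{d_0}}h\|_{L^p(B\times B')}\le C\big(\sum_i\|E^{(2)}_{U_i}h\|_{L^p(B\times B')}^q\big)^{1/q}$. *)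

theory Defs
  imports "HOL-Analysis.Analysis"
begin

definition enn_powr :: "ennreal \<Rightarrow> real \<Rightarrow> ennreal" where
  "enn_powr x a = (if x = \<infinity> then \<infinity> else ennreal (enn2real x powr a))"

definition Lp_on :: "real \<Rightarrow> 'x::euclidean_space set \<Rightarrow> ('x \<Rightarrow> complex) \<Rightarrow> ennreal" where
  "Lp_on p S F = enn_powr (\<integral>\<^sup>+ x \<in> S. ennreal (norm (F x) powr p) \<partial>lebesgue) (1 / p)"

definition e :: "real \<Rightarrow> complex" where
  "e z = exp (2 * complex_of_real pi * \<i> * complex_of_real z)"

definition E1 :: "('a::euclidean_space \<Rightarrow> 'b::euclidean_space) \<Rightarrow> 'a set \<Rightarrow> ('a \<Rightarrow> complex)
    \<Rightarrow> 'a \<times> 'b \<Rightarrow> complex" where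
  "E1 Q1 U g = (\<lambda>(x0, x1). LINT u:U|lebesgue. g u * e (x0 \<bullet> u + x1 \<bullet> Q1 u))"

definition E2 :: "('a::euclidean_space \<Rightarrow> 'b::euclidean_space) \<Rightarrow> ('a \<Rightarrow> 'c::euclidean_space)
    \<Rightarrow> 'a set \<Rightarrow> ('a \<Rightarrow> complex) \<Rightarrow> ('a \<times> 'b) \<times> 'c \<Rightarrow> complex" where
  "E2 Q1 Q2 U h = (\<lambda>((x0, x1), x2). LINT u:U|lebesgue. h u * e (x0 \<bullet> u + x1 \<bullet> Q1 u + x2 \<bullet> Q2 u))"

end

theory Submission
  imports Defs
begin

text \<open>Freezing the last variable \<open>x\<^sub>2 = y\<close> turns \<open>E2 Q1 Q2 U h ((x\<^sub>0, x\<^sub>1), y)\<close> into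
  \<open>E1 Q1 U g\<^sub>y (x\<^sub>0, x\<^sub>1)\<close> for the modulated function \<open>g\<^sub>y u = h u * e (y \<bullet> Q2 u)\<close>, so the
  hypothesis applies to every slice. Raising it to the power \<open>p\<close> and integrating over \<open>y \<in> B'\<close>
  (Tonelli), the right-hand side becomes the \<open>L\<^sup>r(B')\<close> norm, \<open>r = p / q \<ge> 1\<close>, of the finite sum
  of the functions \<open>y \<mapsto> (Lp_on p B (E1 Q1 (U i) g\<^sub>y))\<^sup>q\<close>, and Minkowski's inequality in \<open>L\<^sup>r\<close>
  moves the norm inside the sum.\<close>

lemma convex_on_powr_nonneg:
  assumes "(r::real) \<ge> 1" shows "convex_on {0..} (\<lambda>x::real. x powr r)"
proof (rule convex_onI)
  fix t x y :: real assume t: "0 < t" "t < 1" and x: "x \<in> {0..}" and y: "y \<in> {0..}"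
  have powr_le_self: "s powr r \<le> s" if "0 \<le> s" "s \<le> 1" for s :: real
    using powr_mono'[of 1 r s] that assms by (cases "s = 0") auto
  consider "x > 0" "y > 0" | "x = 0" | "y = 0" using x y by fastforce
  then show "((1 - t) *\<^sub>R x + t *\<^sub>R y) powr r \<le> (1 - t) * x powr r + t * y powr r"
  proof cases
    case 1
    then show ?thesis using convex_onD[OF powr_convex[OF assms], of t x y] t by auto
  next
    case 2
    then show ?thesis
      using mult_right_mono[OF powr_le_self[of t], of "y powr r"] t y by (simp add: powr_mult)
  next
    case 3
    then show ?thesis
      using mult_right_mono[OF powr_le_self[of "1 - t"], of "x powr r"] t x by (simp add: powr_mult)
  qed
qed auto

text \<open>Jensen's inequality for \<open>t \<mapsto> t powr r\<close> with weights \<open>c i / (\<Sum>i\<in>P. c i)\<close> at the points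
  \<open>x i / c i\<close>; taking \<open>c i\<close> to be the \<open>L\<^sup>r\<close> norms of summands gives Minkowski's inequality.\<close>

lemma powr_sum_le_weighted:
  fixes c x :: "'i \<Rightarrow> real"
  assumes P: "finite P" and c: "\<And>i. i \<in> P \<Longrightarrow> c i > 0" and x: "\<And>i. i \<in> P \<Longrightarrow> x i \<ge> 0"
    and r: "r \<ge> 1"
  shows "(\<Sum>i\<in>P. x i) powr r \<le> (\<Sum>i\<in>P. c i) powr (r - 1) * (\<Sum>i\<in>P. c i powr (1 - r) * x i powr r)"
proof (cases "P = {}")
  case False
  define S where "S = (\<Sum>i\<in>P. c i)"
  have S: "S > 0" unfolding S_def using False P c by (intro sum_pos) auto
  have "(c i / S) *\<^sub>R (x i / c i) = x i / S" if "i \<in> P" for i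
    using c[OF that] by simp
  then have "((\<Sum>i\<in>P. x i) / S) powr r = (\<Sum>i\<in>P. (c i / S) *\<^sub>R (x i / c i)) powr r"
    by (simp add: sum_divide_distrib)
  also have "\<dots> \<le> (\<Sum>i\<in>P. (c i / S) * (x i / c i) powr r)"
    using P False S c x
    by (intro convex_on_sum[OF _ _ convex_on_powr_nonneg[OF r]])
       (auto simp: S_def sum_divide_distrib[symmetric] less_imp_le)
  also have "\<dots> = (\<Sum>i\<in>P. c i powr (1 - r) * x i powr r) / S"
    unfolding sum_divide_distrib
  proof (intro sum.cong refl)
    fix i assume i: "i \<in> P"
    have "c i powr (1 - r) = c i * c i powr (- r)"
      using c[OF i] powr_add[of "c i" 1 "- r"] by simp
    then show "c i / S * (x i / c i) powr r = c i powr (1 - r) * x i powr r / S"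
      using c[OF i] x[OF i] by (simp add: powr_divide powr_minus divide_simps)
  qed
  finally have "((\<Sum>i\<in>P. x i) / S) powr r \<le> (\<Sum>i\<in>P. c i powr (1 - r) * x i powr r) / S" .
  then have "S powr r * ((\<Sum>i\<in>P. x i) / S) powr r
      \<le> S powr r * ((\<Sum>i\<in>P. c i powr (1 - r) * x i powr r) / S)"
    by (intro mult_left_mono) auto
  then show ?thesis
    using S x by (simp add: powr_divide powr_diff sum_nonneg S_def)
qed simp

lemma enn_powr_ennreal: "0 \<le> x \<Longrightarrow> enn_powr (ennreal x) a = ennreal (x powr a)"
  by (simp add: enn_powr_def)

lemma enn_powr_top [simp]: "enn_powr top a = top"
  by (simp add: enn_powr_def)

lemma enn_powr_zero [simp]: "enn_powr 0 a = 0"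
  by (simp add: enn_powr_def)

lemma enn_powr_one [simp]: "enn_powr x 1 = x"
  by (cases x rule: ennreal_cases) (auto simp: enn_powr_def)

lemma enn_powr_powr: "enn_powr (enn_powr x a) b = enn_powr x (a * b)"
  by (cases x rule: ennreal_cases) (auto simp: enn_powr_def powr_powr)

lemma enn_powr_mult: "enn_powr (x * y) a = enn_powr x a * enn_powr y a"
  by (cases x rule: ennreal_cases; cases y rule: ennreal_cases)
     (auto simp: enn_powr_def powr_mult ennreal_mult_top ennreal_top_mult
        ennreal_mult_eq_top_iff simp flip: ennreal_mult)

lemma enn_powr_mono: "x \<le> y \<Longrightarrow> 0 \<le> a \<Longrightarrow> enn_powr x a \<le> enn_powr y a"
  by (cases x rule: ennreal_cases; cases y rule: ennreal_cases)
     (auto simp: enn_powr_def powr_mono2 top_unique)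

lemma enn_powr_eq_0_iff: "0 < a \<Longrightarrow> enn_powr x a = 0 \<longleftrightarrow> x = 0"
  by (cases x rule: ennreal_cases) (auto simp: enn_powr_def)

lemma borel_measurable_enn_powr [measurable]:
  assumes [measurable]: "f \<in> borel_measurable M"
  shows "(\<lambda>x. enn_powr (f x) a) \<in> borel_measurable M"
  unfolding enn_powr_def by measurable

lemma enn_powr_sum_le_weighted:
  fixes x :: "'i \<Rightarrow> ennreal" and c :: "'i \<Rightarrow> real"
  assumes P: "finite P" and c: "\<And>i. i \<in> P \<Longrightarrow> c i > 0" and r: "r \<ge> 1"
  shows "enn_powr (\<Sum>i\<in>P. x i) r
    \<le> ennreal ((\<Sum>i\<in>P. c i) powr (r - 1)) * (\<Sum>i\<in>P. ennreal (c i powr (1 - r)) * enn_powr (x i) r)"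
proof (cases "\<exists>i\<in>P. x i = \<infinity>")
  case True
  then obtain i where i: "i \<in> P" "x i = \<infinity>" by blast
  have "\<infinity> = ennreal (c i powr (1 - r)) * enn_powr (x i) r"
    using i c[OF i(1)] by (simp add: ennreal_mult_top)
  also have "\<dots> \<le> (\<Sum>i\<in>P. ennreal (c i powr (1 - r)) * enn_powr (x i) r)"
    using P i by (intro member_le_sum) auto
  finally have "(\<Sum>i\<in>P. ennreal (c i powr (1 - r)) * enn_powr (x i) r) = \<infinity>"
    by (simp add: top_unique)
  moreover have "(\<Sum>i\<in>P. c i) > 0"
    using P c i by (intro sum_pos2[of P i c]) (auto intro: less_imp_le)
  ultimately show ?thesis
    by (simp add: ennreal_mult_top)
next
  case False
  define t where "t i = enn2real (x i)" for i
  have x: "x i = ennreal (t i)" if "i \<in> P" for i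
    using False that by (simp add: t_def ennreal_enn2real_if)
  have t_nonneg: "t i \<ge> 0" for i
    by (simp add: t_def)
  have "(\<Sum>i\<in>P. x i) = ennreal (\<Sum>i\<in>P. t i)"
    by (simp add: x t_nonneg cong: sum.cong)
  then have "enn_powr (\<Sum>i\<in>P. x i) r = ennreal ((\<Sum>i\<in>P. t i) powr r)"
    by (simp add: enn_powr_ennreal sum_nonneg t_nonneg)
  also have "\<dots> \<le> ennreal ((\<Sum>i\<in>P. c i) powr (r - 1) * (\<Sum>i\<in>P. c i powr (1 - r) * t i powr r))"
    using powr_sum_le_weighted[OF P c _ r, where x = t] by (simp add: t_nonneg ennreal_leI)
  also have "\<dots> = ennreal ((\<Sum>i\<in>P. c i) powr (r - 1)) * (\<Sum>i\<in>P. ennreal (c i powr (1 - r) * t i powr r))"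
    using sum_ennreal[of P "\<lambda>i. c i powr (1 - r) * t i powr r"]
    by (simp add: ennreal_mult sum_nonneg)
  also have "\<dots> = ennreal ((\<Sum>i\<in>P. c i) powr (r - 1)) * (\<Sum>i\<in>P. ennreal (c i powr (1 - r)) * enn_powr (x i) r)"
    by (intro arg_cong2[where f = "(*)"] refl sum.cong) (simp_all add: x ennreal_mult enn_powr_ennreal t_nonneg)
  finally show ?thesis .
qed

lemma nn_integral_powr_sum_le_weighted:
  fixes f :: "'i \<Rightarrow> 'y \<Rightarrow> ennreal" and c :: "'i \<Rightarrow> real"
  assumes P: "finite P" and c: "\<And>i. i \<in> P \<Longrightarrow> c i > 0" and r: "r \<ge> 1"
    and f: "\<And>i. i \<in> P \<Longrightarrow> f i \<in> borel_measurable M"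
  shows "(\<integral>\<^sup>+ y. enn_powr (\<Sum>i\<in>P. f i y) r \<partial>M)
    \<le> ennreal ((\<Sum>i\<in>P. c i) powr (r - 1))
        * (\<Sum>i\<in>P. ennreal (c i powr (1 - r)) * (\<integral>\<^sup>+ y. enn_powr (f i y) r \<partial>M))"
proof -
  have "(\<integral>\<^sup>+ y. enn_powr (\<Sum>i\<in>P. f i y) r \<partial>M)
      \<le> (\<integral>\<^sup>+ y. ennreal ((\<Sum>i\<in>P. c i) powr (r - 1))
            * (\<Sum>i\<in>P. ennreal (c i powr (1 - r)) * enn_powr (f i y) r) \<partial>M)"
    by (intro nn_integral_mono enn_powr_sum_le_weighted[OF P c r])
  also have "\<dots> = ennreal ((\<Sum>i\<in>P. c i) powr (r - 1))
      * (\<Sum>i\<in>P. ennreal (c i powr (1 - r)) * (\<integral>\<^sup>+ y. enn_powr (f i y) r \<partial>M))"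
    using P f by (simp add: nn_integral_cmult nn_integral_sum)
  finally show ?thesis .
qed

lemma nn_integral_powr_sum_drop_null:
  fixes f :: "'i \<Rightarrow> 'y \<Rightarrow> ennreal"
  assumes P: "finite P" "P' \<subseteq> P" and r: "r > 0" and f: "\<And>i. i \<in> P \<Longrightarrow> f i \<in> borel_measurable M"
    and null: "\<And>i. i \<in> P - P' \<Longrightarrow> (\<integral>\<^sup>+ y. enn_powr (f i y) r \<partial>M) = 0"
  shows "(\<integral>\<^sup>+ y. enn_powr (\<Sum>i\<in>P. f i y) r \<partial>M) = (\<integral>\<^sup>+ y. enn_powr (\<Sum>i\<in>P'. f i y) r \<partial>M)"
proof -
  have "AE y in M. f i y = 0" if "i \<in> P - P'" for i
  proof -
    have "AE y in M. enn_powr (f i y) r = 0"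
      using null[OF that] f that by (simp add: nn_integral_0_iff_AE)
    then show ?thesis
      using r by (simp add: enn_powr_eq_0_iff)
  qed
  then have "AE y in M. \<forall>i\<in>P - P'. f i y = 0"
    using P by (simp add: AE_finite_all)
  then have "AE y in M. (\<Sum>i\<in>P. f i y) = (\<Sum>i\<in>P'. f i y)"
    by eventually_elim (use P in \<open>auto intro: sum.mono_neutral_right\<close>)
  then show ?thesis
    by (auto intro!: nn_integral_cong_AE elim!: eventually_mono)
qed

lemma nn_integral_Minkowski_sum:
  fixes f :: "'i \<Rightarrow> 'y \<Rightarrow> ennreal"
  assumes P: "finite P" and r: "r \<ge> 1" and f: "\<And>i. i \<in> P \<Longrightarrow> f i \<in> borel_measurable M"
  shows "enn_powr (\<integral>\<^sup>+ y. enn_powr (\<Sum>i\<in>P. f i y) r \<partial>M) (1 / r)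
    \<le> (\<Sum>i\<in>P. enn_powr (\<integral>\<^sup>+ y. enn_powr (f i y) r \<partial>M) (1 / r))"
proof -
  define N where "N i = (\<integral>\<^sup>+ y. enn_powr (f i y) r \<partial>M)" for i
  show ?thesis
  proof (cases "\<exists>i\<in>P. N i = \<infinity>")
    case True
    then obtain i where i: "i \<in> P" "N i = \<infinity>" by blast
    have "enn_powr (N i) (1 / r) \<le> (\<Sum>i\<in>P. enn_powr (N i) (1 / r))"
      using P i by (intro member_le_sum) auto
    then show ?thesis
      using i by (simp add: N_def top_unique)
  next
    case False
    define c where "c i = enn2real (N i) powr (1 / r)" for i
    \<comment> \<open>the weights must be positive, so summands with norm \<open>0\<close> (zero a.e.) are dropped first\<close>
    have c_nonneg: "c i \<ge> 0" for i
      by (simp add: c_def)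
    have N: "N i = ennreal (c i powr r)" if "i \<in> P" for i
      using False that r by (simp add: c_def powr_powr ennreal_enn2real_if)
    define P' where "P' = {i \<in> P. c i > 0}"
    define S where "S = (\<Sum>i\<in>P'. c i)"
    have P': "finite P'" "P' \<subseteq> P" "\<And>i. i \<in> P' \<Longrightarrow> c i > 0"
      using P by (auto simp: P'_def)
    have S_nonneg: "S \<ge> 0"
      by (simp add: S_def c_nonneg sum_nonneg)
    have S_powr: "S powr (r - 1) * S = S powr r"
    proof (cases "S = 0")
      case False
      then show ?thesis
        using S_nonneg powr_add[of S "r - 1" 1] by simp
    qed (use r in simp)
    have "N i = 0" if "i \<in> P - P'" for i
      using that N c_nonneg[of i] r by (auto simp: P'_def)
    then have "(\<integral>\<^sup>+ y. enn_powr (\<Sum>i\<in>P. f i y) r \<partial>M) = (\<integral>\<^sup>+ y. enn_powr (\<Sum>i\<in>P'. f i y) r \<partial>M)"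
      using P P' f r by (intro nn_integral_powr_sum_drop_null) (auto simp: N_def)
    also have "\<dots> \<le> ennreal (S powr (r - 1)) * (\<Sum>i\<in>P'. ennreal (c i powr (1 - r)) * N i)"
      unfolding S_def N_def using P' f r by (intro nn_integral_powr_sum_le_weighted) auto
    also have "(\<Sum>i\<in>P'. ennreal (c i powr (1 - r)) * N i) = ennreal S"
    proof -
      have "c i powr (1 - r) * c i powr r = c i" if "i \<in> P'" for i
        using P'(3)[OF that] by (simp flip: powr_add)
      then show ?thesis
        using P' by (simp add: S_def N ennreal_mult[symmetric] c_nonneg subset_iff cong: sum.cong)
    qed
    also have "ennreal (S powr (r - 1)) * ennreal S = ennreal (S powr r)"
      using S_nonneg S_powr by (metis ennreal_mult powr_ge_zero)
    finally have "enn_powr (\<integral>\<^sup>+ y. enn_powr (\<Sum>i\<in>P. f i y) r \<partial>M) (1 / r) \<le> ennreal S"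
      using enn_powr_mono[of _ "ennreal (S powr r)" "1 / r"] r S_nonneg
      by (simp add: enn_powr_ennreal powr_powr)
    also have "ennreal S = (\<Sum>i\<in>P. enn_powr (N i) (1 / r))"
    proof -
      have "S = (\<Sum>i\<in>P. c i)"
        unfolding S_def using P c_nonneg
        by (intro sum.mono_neutral_left) (auto simp: P'_def less_le)
      then show ?thesis
        using r by (simp add: N enn_powr_ennreal c_nonneg powr_powr cong: sum.cong)
    qed
    finally show ?thesis
      by (simp add: N_def)
  qed
qed

lemma nn_integral_decoupling_le:
  fixes I :: "'y \<Rightarrow> ennreal" and J :: "'i \<Rightarrow> 'y \<Rightarrow> ennreal"
  assumes q: "1 \<le> q" "q \<le> p" and P: "finite P"
    and J: "\<And>i. i \<in> P \<Longrightarrow> J i \<in> borel_measurable M"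
    and H: "\<And>y. y \<in> space M \<Longrightarrow> enn_powr (I y) (1 / p)
      \<le> ennreal C * enn_powr (\<Sum>i\<in>P. enn_powr (enn_powr (J i y) (1 / p)) q) (1 / q)"
  shows "enn_powr (\<integral>\<^sup>+ y. I y \<partial>M) (1 / p)
      \<le> ennreal C * enn_powr (\<Sum>i\<in>P. enn_powr (enn_powr (\<integral>\<^sup>+ y. J i y \<partial>M) (1 / p)) q) (1 / q)"
proof -
  have p: "p > 0" "p / q \<ge> 1"
    using q by auto
  define f where "f i y = enn_powr (J i y) (q / p)" for i y
  have f_meas: "f i \<in> borel_measurable M" if "i \<in> P" for i
    using J[OF that] unfolding f_def by measurable
  have f_powr: "enn_powr (f i y) (p / q) = J i y" for i y
    using p q by (simp add: f_def enn_powr_powr)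
  have minkowski: "(\<integral>\<^sup>+ y. enn_powr (\<Sum>i\<in>P. f i y) (p / q) \<partial>M)
      \<le> enn_powr (\<Sum>i\<in>P. enn_powr (\<integral>\<^sup>+ y. J i y \<partial>M) (q / p)) (p / q)"
  proof -
    have "enn_powr (\<integral>\<^sup>+ y. enn_powr (\<Sum>i\<in>P. f i y) (p / q) \<partial>M) (q / p)
        \<le> (\<Sum>i\<in>P. enn_powr (\<integral>\<^sup>+ y. J i y \<partial>M) (q / p))"
      using nn_integral_Minkowski_sum[OF P p(2) f_meas] by (simp add: f_powr)
    from enn_powr_mono[OF this, of "p / q"] show ?thesis
      using p q by (simp add: enn_powr_powr)
  qed
  have "I y \<le> enn_powr (ennreal C) p * enn_powr (\<Sum>i\<in>P. f i y) (p / q)" if "y \<in> space M" for y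
  proof -
    have "I y = enn_powr (enn_powr (I y) (1 / p)) p"
      using p by (simp add: enn_powr_powr)
    also have "\<dots> \<le> enn_powr (ennreal C * enn_powr (\<Sum>i\<in>P. f i y) (1 / q)) p"
      using H[OF that] p by (intro enn_powr_mono) (simp_all add: f_def enn_powr_powr)
    also have "\<dots> = enn_powr (ennreal C) p * enn_powr (\<Sum>i\<in>P. f i y) (p / q)"
      by (simp add: enn_powr_mult enn_powr_powr)
    finally show ?thesis .
  qed
  then have "(\<integral>\<^sup>+ y. I y \<partial>M) \<le> (\<integral>\<^sup>+ y. enn_powr (ennreal C) p * enn_powr (\<Sum>i\<in>P. f i y) (p / q) \<partial>M)"
    by (rule nn_integral_mono)
  also have "\<dots> = enn_powr (ennreal C) p * (\<integral>\<^sup>+ y. enn_powr (\<Sum>i\<in>P. f i y) (p / q) \<partial>M)"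
    using P f_meas by (simp add: nn_integral_cmult)
  also have "\<dots> \<le> enn_powr (ennreal C) p * enn_powr (\<Sum>i\<in>P. enn_powr (\<integral>\<^sup>+ y. J i y \<partial>M) (q / p)) (p / q)"
    using minkowski by (rule mult_left_mono) simp
  finally have "enn_powr (\<integral>\<^sup>+ y. I y \<partial>M) (1 / p)
      \<le> enn_powr (enn_powr (ennreal C) p * enn_powr (\<Sum>i\<in>P. enn_powr (\<integral>\<^sup>+ y. J i y \<partial>M) (q / p)) (p / q)) (1 / p)"
    using p by (intro enn_powr_mono) auto
  also have "\<dots> = ennreal C * enn_powr (\<Sum>i\<in>P. enn_powr (enn_powr (\<integral>\<^sup>+ y. J i y \<partial>M) (1 / p)) q) (1 / q)"
    using p q by (simp add: enn_powr_mult enn_powr_powr)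
  finally show ?thesis .
qed

lemma lebesgue_indicator_ae_eq_borel:
  assumes "A \<in> sets lebesgue"
  obtains S N where "S \<in> sets borel" "N \<in> null_sets lborel"
    "\<And>x. x \<notin> N \<Longrightarrow> indicator A x = (indicator S x :: ennreal)"
proof -
  from sets_completionE[OF assms] obtain S N N' where
    "A = S \<union> N" "N \<subseteq> N'" "N' \<in> null_sets lborel" "S \<in> sets lborel" by blast
  then show ?thesis
    by (intro that[of S N']) (auto simp: indicator_def)
qed

lemma nn_integral_lebesgue_indicator_eq_lborel:
  assumes "N \<in> null_sets lborel" and "\<And>x. x \<notin> N \<Longrightarrow> indicator A x = (indicator S x :: ennreal)"
  shows "(\<integral>\<^sup>+ x. f x * indicator A x \<partial>lebesgue) = (\<integral>\<^sup>+ x. f x * indicator S x \<partial>lborel)"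
  unfolding nn_integral_completion
  by (rule nn_integral_cong_AE) (use AE_not_in[OF assms(1)] assms(2) in auto)

lemma borel_measurable_nn_integral_lebesgue_section:
  fixes F :: "'x::euclidean_space \<times> 'y::euclidean_space \<Rightarrow> ennreal"
  assumes F: "F \<in> borel_measurable borel" and A: "A \<in> sets lebesgue"
  shows "(\<lambda>y. \<integral>\<^sup>+ x. F (x, y) * indicator A x \<partial>lebesgue) \<in> borel_measurable lebesgue"
proof -
  obtain S N where [measurable]: "S \<in> sets borel" and N: "N \<in> null_sets lborel"
    and SN: "\<And>x. x \<notin> N \<Longrightarrow> indicator A x = (indicator S x :: ennreal)"
    using lebesgue_indicator_ae_eq_borel[OF A] by blast
  have [measurable]: "F \<in> borel_measurable (lborel \<Otimes>\<^sub>M lborel)"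
    using F unfolding lborel_prod by simp
  have "(\<lambda>y. \<integral>\<^sup>+ x. F (x, y) * indicator S x \<partial>lborel) \<in> borel_measurable lborel"
    by measurable
  moreover have "(\<integral>\<^sup>+ x. F (x, y) * indicator A x \<partial>lebesgue) = (\<integral>\<^sup>+ x. F (x, y) * indicator S x \<partial>lborel)" for y
    by (rule nn_integral_lebesgue_indicator_eq_lborel[OF N SN])
  ultimately show ?thesis
    by (simp add: measurable_completion)
qed

lemma nn_integral_lebesgue_Times:
  fixes F :: "'x::euclidean_space \<times> 'y::euclidean_space \<Rightarrow> ennreal"
  assumes F: "F \<in> borel_measurable borel" and A: "A \<in> sets lebesgue" and A': "A' \<in> sets lebesgue"
  shows "(\<integral>\<^sup>+ z. F z * indicator (A \<times> A') z \<partial>lebesgue)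
       = (\<integral>\<^sup>+ y. (\<integral>\<^sup>+ x. F (x, y) * indicator A x \<partial>lebesgue) * indicator A' y \<partial>lebesgue)"
proof -
  obtain S N where [measurable]: "S \<in> sets borel" and N: "N \<in> null_sets lborel"
    and SN: "\<And>x. x \<notin> N \<Longrightarrow> indicator A x = (indicator S x :: ennreal)"
    using lebesgue_indicator_ae_eq_borel[OF A] by blast
  obtain T N' where [measurable]: "T \<in> sets borel" and N': "N' \<in> null_sets lborel"
    and TN': "\<And>y. y \<notin> N' \<Longrightarrow> indicator A' y = (indicator T y :: ennreal)"
    using lebesgue_indicator_ae_eq_borel[OF A'] by blast
  have [measurable]: "F \<in> borel_measurable (lborel \<Otimes>\<^sub>M lborel)"
    using F unfolding lborel_prod by simp
  have inner: "(\<integral>\<^sup>+ x. F (x, y) * indicator A x \<partial>lebesgue) = (\<integral>\<^sup>+ x. F (x, y) * indicator S x \<partial>lborel)" for y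
    by (rule nn_integral_lebesgue_indicator_eq_lborel[OF N SN])
  have "N \<times> UNIV \<union> UNIV \<times> N' \<in> null_sets (lborel \<Otimes>\<^sub>M lborel :: ('x \<times> 'y) measure)"
    using N N' by (intro null_sets.Un lborel.times_in_null_sets1 lborel.times_in_null_sets2) auto
  then have "AE z in lborel. z \<notin> N \<times> UNIV \<union> UNIV \<times> N'"
    unfolding lborel_prod by (rule AE_not_in)
  moreover have "F z * indicator (A \<times> A') z = F z * indicator (S \<times> T) z"
    if "z \<notin> N \<times> UNIV \<union> UNIV \<times> N'" for z
    using that SN[of "fst z"] TN'[of "snd z"] by (cases z) (simp add: indicator_times)
  ultimately have "AE z in lborel. F z * indicator (A \<times> A') z = F z * indicator (S \<times> T) z"
    by (rule eventually_mono)
  then have "(\<integral>\<^sup>+ z. F z * indicator (A \<times> A') z \<partial>lebesgue) = (\<integral>\<^sup>+ z. F z * indicator (S \<times> T) z \<partial>lborel)"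
    unfolding nn_integral_completion by (rule nn_integral_cong_AE)
  also have "\<dots> = (\<integral>\<^sup>+ y. (\<integral>\<^sup>+ x. F (x, y) * indicator S x \<partial>lborel) * indicator T y \<partial>lborel)"
    unfolding lborel_prod[symmetric]
    by (subst lborel_pair.nn_integral_snd[symmetric])
       (auto intro!: nn_integral_cong simp: indicator_times mult.assoc[symmetric] nn_integral_multc)
  also have "\<dots> = (\<integral>\<^sup>+ y. (\<integral>\<^sup>+ x. F (x, y) * indicator A x \<partial>lebesgue) * indicator A' y \<partial>lebesgue)"
    unfolding inner by (rule nn_integral_lebesgue_indicator_eq_lborel[OF N' TN', symmetric])
  finally show ?thesis .
qed

lemma sigma_finite_lebesgue: "sigma_finite_measure (lebesgue :: 'a::euclidean_space measure)"
proof
  obtain A :: "nat \<Rightarrow> 'a set" where "range A \<subseteq> sets lborel" "(\<Union>i. A i) = space lborel"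
    "\<And>i. emeasure lborel (A i) \<noteq> \<infinity>"
    using lborel.sigma_finite by blast
  then show "\<exists>A. countable A \<and> A \<subseteq> sets (lebesgue :: 'a measure) \<and> \<Union>A = space lebesgue
      \<and> (\<forall>a\<in>A. emeasure lebesgue a \<noteq> \<infinity>)"
    by (intro exI[of _ "range A"]) auto
qed

interpretation lebesgue: sigma_finite_measure "lebesgue :: 'a::euclidean_space measure"
  by (rule sigma_finite_lebesgue)

lemma borel_measurable_e [measurable]: "e \<in> borel_measurable borel"
  unfolding e_def by (intro borel_measurable_continuous_onI continuous_intros)

lemma borel_measurable_E2:
  fixes Q1 :: "'a::euclidean_space \<Rightarrow> 'b::euclidean_space" and Q2 :: "'a \<Rightarrow> 'c::euclidean_space"
  assumes [measurable]: "Q1 \<in> borel_measurable lebesgue" "Q2 \<in> borel_measurable lebesgue"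
    "h \<in> borel_measurable lebesgue" "V \<in> sets lebesgue"
  shows "E2 Q1 Q2 V h \<in> borel_measurable borel"
proof -
  let ?N = "((lborel \<Otimes>\<^sub>M lborel) \<Otimes>\<^sub>M lborel) \<Otimes>\<^sub>M (lebesgue :: 'a measure)"
  have [measurable]: "(\<lambda>u::'a. u) \<in> borel_measurable lebesgue"
    by (rule measurable_completion) simp
  have [measurable]: "(\<lambda>z. fst (fst (fst z)) \<bullet> snd z) \<in> borel_measurable ?N"
    "(\<lambda>z. snd (fst (fst z)) \<bullet> Q1 (snd z)) \<in> borel_measurable ?N"
    "(\<lambda>z. snd (fst z) \<bullet> Q2 (snd z)) \<in> borel_measurable ?N"
    by (rule borel_measurable_inner; measurable)+
  have "(\<lambda>x. \<integral>u. indicator V u *\<^sub>R (h u * e (fst (fst x) \<bullet> u + snd (fst x) \<bullet> Q1 u + snd x \<bullet> Q2 u)) \<partial>lebesgue)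
     \<in> borel_measurable ((lborel \<Otimes>\<^sub>M lborel) \<Otimes>\<^sub>M lborel)"
    by (rule lebesgue.borel_measurable_lebesgue_integral) measurable
  then show ?thesis
    unfolding lborel_prod by (simp add: E2_def set_lebesgue_integral_def case_prod_beta')
qed

lemma e_add: "e (a + b) = e a * e b"
  by (simp add: e_def distrib_left exp_add)

lemma E2_eq_E1_modulated: "E2 Q1 Q2 V h (x, y) = E1 Q1 V (\<lambda>u. h u * e (y \<bullet> Q2 u)) x"
proof -
  have "e (fst x \<bullet> u + snd x \<bullet> Q1 u + y \<bullet> Q2 u) = e (y \<bullet> Q2 u) * e (fst x \<bullet> u + snd x \<bullet> Q1 u)" for u
    by (simp add: e_add)
  then show ?thesis
    by (simp add: E2_def E1_def case_prod_beta mult.assoc)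
qed

lemma
  fixes Q1 :: "'a::euclidean_space \<Rightarrow> 'b::euclidean_space" and Q2 :: "'a \<Rightarrow> 'c::euclidean_space"
  assumes "Q1 \<in> borel_measurable lebesgue" "Q2 \<in> borel_measurable lebesgue"
    "h \<in> borel_measurable lebesgue" "V \<in> sets lebesgue" and B: "B \<in> sets lebesgue"
  shows Lp_on_Times_E2: "B' \<in> sets lebesgue \<Longrightarrow> Lp_on p (B \<times> B') (E2 Q1 Q2 V h)
      = enn_powr (\<integral>\<^sup>+ y. (\<integral>\<^sup>+ x \<in> B. ennreal (norm (E1 Q1 V (\<lambda>u. h u * e (y \<bullet> Q2 u)) x) powr p) \<partial>lebesgue)
          * indicator B' y \<partial>lebesgue) (1 / p)"
    and borel_measurable_Lp_on_slice_E1: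
      "(\<lambda>y. \<integral>\<^sup>+ x \<in> B. ennreal (norm (E1 Q1 V (\<lambda>u. h u * e (y \<bullet> Q2 u)) x) powr p) \<partial>lebesgue)
        \<in> borel_measurable lebesgue"
proof -
  have [measurable]: "E2 Q1 Q2 V h \<in> borel_measurable borel"
    using assms(1-4) by (rule borel_measurable_E2)
  have F: "(\<lambda>z. ennreal (norm (E2 Q1 Q2 V h z) powr p)) \<in> borel_measurable borel"
    by measurable
  show "B' \<in> sets lebesgue \<Longrightarrow> Lp_on p (B \<times> B') (E2 Q1 Q2 V h)
      = enn_powr (\<integral>\<^sup>+ y. (\<integral>\<^sup>+ x \<in> B. ennreal (norm (E1 Q1 V (\<lambda>u. h u * e (y \<bullet> Q2 u)) x) powr p) \<partial>lebesgue)
          * indicator B' y \<partial>lebesgue) (1 / p)"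
    unfolding Lp_on_def nn_integral_lebesgue_Times[OF F B] by (simp add: E2_eq_E1_modulated)
  show "(\<lambda>y. \<integral>\<^sup>+ x \<in> B. ennreal (norm (E1 Q1 V (\<lambda>u. h u * e (y \<bullet> Q2 u)) x) powr p) \<partial>lebesgue)
      \<in> borel_measurable lebesgue"
    using borel_measurable_nn_integral_lebesgue_section[OF F B] by (simp add: E2_eq_E1_modulated)
qed

theorem lemma3p1:
  fixes p q C :: real
    and Q1 :: "'a::euclidean_space \<Rightarrow> 'b::euclidean_space"
    and Q2 :: "'a \<Rightarrow> 'c::euclidean_space"
    and U :: "nat \<Rightarrow> 'a set" and l :: nat
    and B :: "('a \<times> 'b) set"
  assumes "1 \<le> q" and "q \<le> p"
    and "Q1 \<in> borel_measurable lebesgue" and "Q2 \<in> borel_measurable lebesgue"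
    and "\<And>i. i < l \<Longrightarrow> U i \<in> sets lebesgue"
    and "\<And>i j. i < l \<Longrightarrow> j < l \<Longrightarrow> i \<noteq> j \<Longrightarrow> U i \<inter> U j = {}"
    and "(\<Union>i<l. U i) = cbox 0 One"
    and "B \<in> sets lebesgue"
    and hyp: "\<And>g :: 'a \<Rightarrow> complex. g \<in> borel_measurable lebesgue \<Longrightarrow>
       Lp_on p B (E1 Q1 (cbox 0 One) g)
         \<le> ennreal C * enn_powr (\<Sum>i<l. enn_powr (Lp_on p B (E1 Q1 (U i) g)) q) (1 / q)"
  shows "\<forall>B' :: 'c set. \<forall>h :: 'a \<Rightarrow> complex.
     B' \<in> sets lebesgue \<longrightarrow> h \<in> borel_measurable lebesgue \<longrightarrow>
       Lp_on p (B \<times> B') (E2 Q1 Q2 (cbox 0 One) h)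
         \<le> ennreal C * enn_powr (\<Sum>i<l. enn_powr (Lp_on p (B \<times> B') (E2 Q1 Q2 (U i) h)) q) (1 / q)"
proof (intro allI impI)
  fix B' :: "'c set" and h :: "'a \<Rightarrow> complex"
  assume B': "B' \<in> sets lebesgue" and h: "h \<in> borel_measurable lebesgue"
  define N where "N V y = (\<integral>\<^sup>+ x \<in> B. ennreal (norm (E1 Q1 V (\<lambda>u. h u * e (y \<bullet> Q2 u)) x) powr p) \<partial>lebesgue)"
    for V y
  have modulated: "(\<lambda>u. h u * e (y \<bullet> Q2 u)) \<in> borel_measurable lebesgue" for y
    using assms(4) h by measurable
  have "enn_powr (\<integral>\<^sup>+ y. N (cbox 0 One) y * indicator B' y \<partial>lebesgue) (1 / p)
      \<le> ennreal C * enn_powr (\<Sum>i<l. enn_powr (enn_powr (\<integral>\<^sup>+ y. N (U i) y * indicator B' y \<partial>lebesgue) (1 / p)) q) (1 / q)"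
  proof (rule nn_integral_decoupling_le[OF assms(1,2) finite_lessThan])
    show "(\<lambda>y. N (U i) y * indicator B' y) \<in> borel_measurable lebesgue" if "i \<in> {..<l}" for i
      using borel_measurable_Lp_on_slice_E1[OF assms(3,4) h assms(5) assms(8)] that B'
      unfolding N_def by (intro borel_measurable_times_ennreal borel_measurable_indicator) auto
    show "enn_powr (N (cbox 0 One) y * indicator B' y) (1 / p)
      \<le> ennreal C * enn_powr (\<Sum>i<l. enn_powr (enn_powr (N (U i) y * indicator B' y) (1 / p)) q) (1 / q)" for y
      using hyp[OF modulated[of y]] by (cases "y \<in> B'") (simp_all add: N_def Lp_on_def)
  qed
  then show "Lp_on p (B \<times> B') (E2 Q1 Q2 (cbox 0 One) h)
      \<le> ennreal C * enn_powr (\<Sum>i<l. enn_powr (Lp_on p (B \<times> B') (E2 Q1 Q2 (U i) h)) q) (1 / q)"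
    using assms(3,4,5,8) h B' by (simp add: Lp_on_Times_E2 N_def)
qed

end
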